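(* Let $\mathfrak g$ be a real almost abelian Lie algebra (i.e. $\mathfrak g$ has an abelian ideal of codimension one) and let $(J,\langle\cdot,\cdot\rangle)$ be a Hermitian structure on $\mathfrak g$. Then there exist a $J$-invariant abelian ideal $\mathfrak a$ of $\mathfrak g$ of codimension $2$, an orthonormal basis $\{f_1,f_2\}$ of $\mathfrak a^{\perp}$, a vector $v_0\in\mathfrak a$ and a number $\mu\in\mathbb R$ such that $[f_1,f_2]=\mu f_2+v_0$, the endomorphism $\operatorname{ad}_{f_1}|_{\mathfrak a}$ of $\mathfrak a$ commutes with $J|_{\mathfrak a}$, and $\operatorname{ad}_{f_2}|_{\mathfrak a}=0$.
   Context: A complex structure on a real Lie algebra $\mathfrak g$ is an endomorphism $J$ with $J^2=-\mathrm{Id}$ and vanishing Nijenhuis tensor $N_J(x,y)=[Jx,Jy]-[x,y]-J([Jx,y]+[x,Jy])$ for all $x,y\in\mathfrak g$. A Hermitian structure $(J,\langle\cdot,\cdot\rangle)$ consists of a complex structure $J$ and an inner product with $\langle Jx,Jy\rangle=\langle x,y\rangle$. *)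

theory Defs
  imports "HOL-Analysis.Analysis"
begin

definition lie_algebra :: "('a::euclidean_space \<Rightarrow> 'a \<Rightarrow> 'a) \<Rightarrow> bool" where
  "lie_algebra br \<longleftrightarrow> bilinear br
     \<and> (\<forall>x y. br x y = - br y x)
     \<and> (\<forall>x y z. br x (br y z) + br y (br z x) + br z (br x y) = 0)"

definition lie_ideal :: "('a::euclidean_space \<Rightarrow> 'a \<Rightarrow> 'a) \<Rightarrow> 'a set \<Rightarrow> bool" where
  "lie_ideal br I \<longleftrightarrow> subspace I \<and> (\<forall>x y. y \<in> I \<longrightarrow> br x y \<in> I)"

definition abelian_subset :: "('a::euclidean_space \<Rightarrow> 'a \<Rightarrow> 'a) \<Rightarrow> 'a set \<Rightarrow> bool" where
  "abelian_subset br I \<longleftrightarrow> (\<forall>x\<in>I. \<forall>y\<in>I. br x y = 0)"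

definition almost_abelian :: "('a::euclidean_space \<Rightarrow> 'a \<Rightarrow> 'a) \<Rightarrow> bool" where
  "almost_abelian br \<longleftrightarrow>
     (\<exists>I. lie_ideal br I \<and> abelian_subset br I \<and> dim I + 1 = DIM('a))"

definition nijenhuis :: "('a::euclidean_space \<Rightarrow> 'a \<Rightarrow> 'a) \<Rightarrow> ('a \<Rightarrow> 'a) \<Rightarrow> 'a \<Rightarrow> 'a \<Rightarrow> 'a" where
  "nijenhuis br J x y = br (J x) (J y) - br x y - J (br (J x) y + br x (J y))"

definition complex_structure :: "('a::euclidean_space \<Rightarrow> 'a \<Rightarrow> 'a) \<Rightarrow> ('a \<Rightarrow> 'a) \<Rightarrow> bool" where
  "complex_structure br J \<longleftrightarrow> linear J \<and> (\<forall>x. J (J x) = - x)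
     \<and> (\<forall>x y. nijenhuis br J x y = 0)"

definition hermitian_structure :: "('a::euclidean_space \<Rightarrow> 'a \<Rightarrow> 'a) \<Rightarrow> ('a \<Rightarrow> 'a) \<Rightarrow> bool" where
  "hermitian_structure br J \<longleftrightarrow> complex_structure br J \<and> (\<forall>x y. J x \<bullet> J y = x \<bullet> y)"

end

theory Submission
  imports Defs
begin

text \<open>Let \<open>I\<close> be the abelian ideal of codimension one and \<open>f\<^sub>1\<close> a unit normal to it, so that
  \<open>I = f\<^sub>1\<^sup>\<bottom>\<close>. Since \<open>J\<close> is orthogonal and skew, \<open>f\<^sub>2 = J f\<^sub>1\<close> is a unit vector of \<open>I\<close>, and
  \<open>\<aa> = {f\<^sub>1, f\<^sub>2}\<^sup>\<bottom> = I \<inter> J\<^sup>-\<^sup>1 I\<close> is \<open>J\<close>-invariant of codimension two. As \<open>I\<close> is abelian,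
  \<open>ad f\<^sub>2\<close> vanishes on \<open>\<aa>\<close>, and the vanishing of the Nijenhuis tensor on \<open>(f\<^sub>2, x)\<close> then says
  exactly that \<open>ad f\<^sub>1\<close> commutes with \<open>J\<close> on \<open>\<aa>\<close>. Hence \<open>ad f\<^sub>1\<close> maps \<open>\<aa>\<close> into
  \<open>I \<inter> J\<^sup>-\<^sup>1 I = \<aa>\<close>, and since \<open>\<gg> = \<real> f\<^sub>1 + I\<close> this makes \<open>\<aa>\<close> an ideal.\<close>

lemma orthogonal_comp_span: "(span S)\<^sup>\<bottom> = S\<^sup>\<bottom>"
proof
  show "(span S)\<^sup>\<bottom> \<subseteq> S\<^sup>\<bottom>"
    using span_superset by (rule orthogonal_comp_anti_mono)
  show "S\<^sup>\<bottom> \<subseteq> (span S)\<^sup>\<bottom>"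
    by (auto simp: orthogonal_comp_def intro: orthogonal_to_span[THEN orthogonal_commute[THEN iffD1]]
        orthogonal_commute[THEN iffD1])
qed

lemma orthogonal_comp_orthogonal_comp:
  fixes S :: "'a::euclidean_space set"
  shows "S\<^sup>\<bottom>\<^sup>\<bottom> = span S"
  by (metis orthogonal_comp_self orthogonal_comp_span subspace_span)

lemma dim_orthogonal_comp:
  fixes W :: "'a::euclidean_space set"
  assumes "subspace W"
  shows "dim (W\<^sup>\<bottom>) + dim W = DIM('a)"
  using dim_subspace_orthogonal_to_vectors[OF assms subspace_UNIV]
  by (simp add: orthogonal_comp_def)

lemma codim_one_subspace_eq_orthogonal_comp:
  fixes I :: "'a::euclidean_space set"
  assumes "subspace I" and "dim I + 1 = DIM('a)"
  obtains f where "norm f = 1" and "I = {f}\<^sup>\<bottom>"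
proof -
  obtain g where "g \<noteq> 0" and g: "\<And>y. y \<in> span I \<Longrightarrow> orthogonal g y"
    using orthogonal_to_subspace_exists[of I] assms(2) by auto
  define f where "f = g /\<^sub>R norm g"
  have "norm f = 1" and "f \<noteq> 0"
    using \<open>g \<noteq> 0\<close> by (auto simp: f_def)
  have "I \<subseteq> {f}\<^sup>\<bottom>"
    using g span_base by (auto simp: f_def orthogonal_comp_def orthogonal_def)
  moreover have "dim ({f}\<^sup>\<bottom>) + 1 = DIM('a)"
    using dim_orthogonal_comp[of "span {f}"] \<open>f \<noteq> 0\<close>
    by (auto simp: orthogonal_comp_span dim_insert)
  ultimately have "I = {f}\<^sup>\<bottom>"
    using assms by (intro subspace_dim_equal subspace_orthogonal_comp) auto
  then show thesis
    using that \<open>norm f = 1\<close> by blast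
qed

lemma span_insert_codim_one:
  fixes I :: "'a::euclidean_space set"
  assumes "subspace I" and "dim I + 1 = DIM('a)" and "f \<notin> I"
  shows "span (insert f I) = UNIV"
proof -
  have "f \<notin> span I"
    using assms(1,3) by (metis span_eq_iff)
  then show ?thesis
    using assms(2) by (simp add: dim_eq_full[symmetric] dim_insert)
qed

lemma lie_ideal_if_ad_invariant:
  assumes "bilinear br" and "subspace I" and "abelian_subset br I"
    and "span (insert f I) = UNIV"
    and "subspace A" and "A \<subseteq> I" and "\<And>y. y \<in> A \<Longrightarrow> br f y \<in> A"
  shows "lie_ideal br A"
  unfolding lie_ideal_def
proof (intro conjI allI impI)
  fix x y
  assume "y \<in> A"
  obtain k where "x - k *\<^sub>R f \<in> I"
    using span_breakdown_eq[of x f I] span_eq_iff[THEN iffD2, OF assms(2)] assms(4) by auto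
  then have "br (x - k *\<^sub>R f) y = 0"
    using assms(3,6) \<open>y \<in> A\<close> by (auto simp: abelian_subset_def)
  then have "br x y = k *\<^sub>R br f y"
    by (simp add: bilinear_lsub[OF assms(1)] bilinear_lmul[OF assms(1)])
  then show "br x y \<in> A"
    using assms(5,7) \<open>y \<in> A\<close> by (simp add: subspace_scale)
qed fact

lemma isometric_involution_skew:
  assumes "\<And>x y. J x \<bullet> J y = x \<bullet> y" and "\<And>x. J (J x) = - x"
  shows "x \<bullet> J y = - (J x \<bullet> y)"
  using assms(1)[of x "J y"] by (simp add: assms(2))

lemma isometric_involution_unit_orthogonal:
  assumes "\<And>x y. J x \<bullet> J y = x \<bullet> y" and "\<And>x. J (J x) = - x" and "norm f = 1"
  shows "norm (J f) = 1" and "f \<bullet> J f = 0"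
  using assms(1)[of f f] assms(3) isometric_involution_skew[OF assms(1,2), of f f]
  by (auto simp: norm_eq_sqrt_inner inner_commute)

lemma orthogonal_comp_complex_line:
  assumes "\<And>x y. J x \<bullet> J y = x \<bullet> y" and "\<And>x. J (J x) = - x"
  shows "{f, J f}\<^sup>\<bottom> = {z. z \<in> {f}\<^sup>\<bottom> \<and> J z \<in> {f}\<^sup>\<bottom>}"
  using isometric_involution_skew[OF assms, of f]
  by (auto simp: orthogonal_comp_def orthogonal_def)

lemma orthogonal_comp_complex_line_invariant:
  assumes "\<And>x y. J x \<bullet> J y = x \<bullet> y" and "\<And>x. J (J x) = - x"
  shows "J ` ({f, J f}\<^sup>\<bottom>) \<subseteq> {f, J f}\<^sup>\<bottom>"
proof (rule image_subsetI)
  fix z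
  assume "z \<in> {f, J f}\<^sup>\<bottom>"
  then have "z \<in> {f}\<^sup>\<bottom>" and "J z \<in> {f}\<^sup>\<bottom>"
    using orthogonal_comp_complex_line[OF assms, of f] by blast+
  moreover have "J (J z) \<in> {f}\<^sup>\<bottom>"
    using subspace_neg[OF subspace_orthogonal_comp \<open>z \<in> {f}\<^sup>\<bottom>\<close>] by (simp add: assms(2))
  ultimately show "J z \<in> {f, J f}\<^sup>\<bottom>"
    using orthogonal_comp_complex_line[OF assms, of f] by blast
qed

lemma dim_orthogonal_comp_complex_line:
  fixes f :: "'a::euclidean_space"
  assumes "\<And>x y. J x \<bullet> J y = x \<bullet> y" and "\<And>x. J (J x) = - x" and "norm f = 1"
  shows "dim ({f, J f}\<^sup>\<bottom>) + 2 = DIM('a)"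
proof -
  have "norm (J f) = 1" and "f \<bullet> J f = 0"
    using isometric_involution_unit_orthogonal[OF assms] by auto
  then have "independent {f, J f}"
    using \<open>norm f = 1\<close>
    by (intro pairwise_orthogonal_independent) (auto simp: pairwise_def orthogonal_def inner_commute)
  moreover have "f \<noteq> J f"
    using \<open>f \<bullet> J f = 0\<close> \<open>norm f = 1\<close> by auto
  ultimately have "dim (span {f, J f}) = 2"
    by (simp add: dim_eq_card_independent)
  then show ?thesis
    using dim_orthogonal_comp[of "span {f, J f}"] by (simp add: orthogonal_comp_span)
qed

lemma diff_projection_in_orthogonal_comp_insert:
  assumes "w \<in> S\<^sup>\<bottom>" and "g \<in> S\<^sup>\<bottom>" and "norm g = 1"
  shows "w - (g \<bullet> w) *\<^sub>R g \<in> (insert g S)\<^sup>\<bottom>"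
  using assms by (auto simp: orthogonal_comp_def orthogonal_def inner_diff_right norm_eq_1)

lemma bracket_commutes_with_complex_structure:
  assumes "complex_structure br J" and "br y x = 0" and "br y (J x) = 0"
  shows "br (J y) (J x) = J (br (J y) x)"
  using assms unfolding complex_structure_def nijenhuis_def
  by (metis add.right_neutral diff_zero eq_iff_diff_eq_0)

text \<open>The Nijenhuis condition on the pair \<open>(- J f, x)\<close>, where \<open>J (- J f) = f\<close>.\<close>

lemma ad_commutes_with_complex_structure:
  assumes "complex_structure br J" and "bilinear br" and "abelian_subset br I"
    and "J f \<in> I" and "x \<in> I" and "J x \<in> I"
  shows "br f (J x) = J (br f x)"
proof -
  have "J (- J f) = f"
    using assms(1) by (simp add: complex_structure_def linear_neg)
  moreover have "br (- J f) x = 0" and "br (- J f) (J x) = 0"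
    using assms(3-6) by (auto simp: abelian_subset_def bilinear_lneg[OF assms(2)])
  ultimately show ?thesis
    using bracket_commutes_with_complex_structure[OF assms(1), of "- J f" x] by simp
qed

theorem lemma3p1:
  fixes br :: "'a::euclidean_space \<Rightarrow> 'a \<Rightarrow> 'a" and J :: "'a \<Rightarrow> 'a"
  assumes "lie_algebra br" and "almost_abelian br" and "hermitian_structure br J"
  shows "\<exists>A f1 f2 v0 (\<mu>::real).
           lie_ideal br A \<and> abelian_subset br A \<and> J ` A \<subseteq> A \<and> dim A + 2 = DIM('a)
         \<and> f1 \<in> orthogonal_comp A \<and> f2 \<in> orthogonal_comp A
         \<and> norm f1 = 1 \<and> norm f2 = 1 \<and> f1 \<bullet> f2 = 0
         \<and> span {f1, f2} = orthogonal_comp A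
         \<and> v0 \<in> A \<and> br f1 f2 = \<mu> *\<^sub>R f2 + v0
         \<and> (\<forall>x\<in>A. br f1 (J x) = J (br f1 x))
         \<and> (\<forall>x\<in>A. br f2 x = 0)"
proof -
  have bil: "bilinear br"
    using assms(1) by (simp add: lie_algebra_def)
  have cs: "complex_structure br J" and Jiso: "\<And>x y. J x \<bullet> J y = x \<bullet> y"
    and JJ: "\<And>x. J (J x) = - x"
    using assms(3) by (auto simp: hermitian_structure_def complex_structure_def)
  obtain I where "lie_ideal br I" and I_abelian: "abelian_subset br I" and "dim I + 1 = DIM('a)"
    using assms(2) by (auto simp: almost_abelian_def)
  then have "subspace I" and I_ideal: "\<And>x y. y \<in> I \<Longrightarrow> br x y \<in> I"
    by (auto simp: lie_ideal_def)
  obtain f1 where "norm f1 = 1" and I: "I = {f1}\<^sup>\<bottom>"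
    using codim_one_subspace_eq_orthogonal_comp[OF \<open>subspace I\<close> \<open>dim I + 1 = DIM('a)\<close>] .
  define f2 where "f2 = J f1"
  define A where "A = {f1, f2}\<^sup>\<bottom>"
  have A: "A = {z. z \<in> I \<and> J z \<in> I}"
    by (simp add: A_def f2_def I orthogonal_comp_complex_line[OF Jiso JJ])
  have "norm f2 = 1" and "f1 \<bullet> f2 = 0"
    using isometric_involution_unit_orthogonal[OF Jiso JJ \<open>norm f1 = 1\<close>] by (auto simp: f2_def)
  then have "f2 \<in> I" and "f1 \<notin> I"
    using \<open>norm f1 = 1\<close> by (auto simp: I orthogonal_comp_def orthogonal_def inner_commute)
  have ad_f1_J: "\<forall>x\<in>A. br f1 (J x) = J (br f1 x)"
    using ad_commutes_with_complex_structure[OF cs bil I_abelian] \<open>f2 \<in> I\<close> by (auto simp: A f2_def)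
  define \<mu> where "\<mu> = f2 \<bullet> br f1 f2"
  have "lie_ideal br A"
  proof (rule lie_ideal_if_ad_invariant[OF bil \<open>subspace I\<close> I_abelian])
    show "span (insert f1 I) = UNIV"
      using span_insert_codim_one \<open>subspace I\<close> \<open>dim I + 1 = DIM('a)\<close> \<open>f1 \<notin> I\<close> .
    show "br f1 y \<in> A" if "y \<in> A" for y
      using that I_ideal bspec[OF ad_f1_J that, symmetric] by (auto simp: A)
    show "subspace A"
      by (simp add: A_def subspace_orthogonal_comp)
  qed (auto simp: A)
  moreover have "abelian_subset br A" and "\<forall>x\<in>A. br f2 x = 0"
    using I_abelian \<open>f2 \<in> I\<close> by (auto simp: A abelian_subset_def)
  moreover have "br f1 f2 - \<mu> *\<^sub>R f2 \<in> A"
    using diff_projection_in_orthogonal_comp_insert[of _ "{f1}" f2] I_ideal \<open>f2 \<in> I\<close> \<open>norm f2 = 1\<close>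
    by (simp add: A_def I \<mu>_def insert_commute)
  moreover have "span {f1, f2} = A\<^sup>\<bottom>"
    by (simp add: A_def orthogonal_comp_orthogonal_comp)
  ultimately show ?thesis
    using orthogonal_comp_complex_line_invariant[OF Jiso JJ, of f1]
      dim_orthogonal_comp_complex_line[OF Jiso JJ \<open>norm f1 = 1\<close>]
      \<open>norm f1 = 1\<close> \<open>norm f2 = 1\<close> \<open>f1 \<bullet> f2 = 0\<close> ad_f1_J
    by (intro exI[of _ A] exI[of _ f1] exI[of _ f2] exI[of _ "br f1 f2 - \<mu> *\<^sub>R f2"] exI[of _ \<mu>])
      (auto simp: A_def f2_def span_base)
qed

end
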